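(* ${\sf MBRev}(\mathcal D_{ERC}(H))=\Omega(\log\log H)$ as $H\to\infty$.
   Context: $\mathcal D_{ERC}(H)$ (equal revenue curve truncated at $H$) is the distribution on $[1,H]$ with $\Pr[v\ge t]=1/t$ for $t\in[1,H]$, i.e. density $q(v)=1/v^2$ on $[1,H)$ and an atom of mass $1/H$ at $H$. For a distribution with density $q$ on $[1,H]$ the mean-based revenue is ${\sf MBRev}=\sup_{x}\int_1^H q(v)\big(v\,x(v)-\sup_{1\le w<v}(v-w)x(w)\big)\,dv$ (plus the analogous contribution of any atom), where the supremum is over functions $x:[1,H]\to[0,1]$. Note ${\sf Mye}(\mathcal D_{ERC}(H))=1$. *)

theory Defs
  imports "HOL-Analysis.Analysis" "HOL-Library.Landau_Symbols"
begin

definition dev :: "(real \<Rightarrow> real) \<Rightarrow> real \<Rightarrow> real" where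
  "dev x v = (SUP w\<in>{1..<v}. (v - w) * x w)"

text \<open>Density of the truncated equal revenue curve on [1,H).\<close>
definition q_ERC :: "real \<Rightarrow> real" where
  "q_ERC v = 1 / v\<^sup>2"

text \<open>Mean-based revenue objective of an allocation x for D_ERC(H):
  continuous part with density 1/v^2 on [1,H) plus the atom of mass 1/H at H.\<close>
definition mb_obj :: "real \<Rightarrow> (real \<Rightarrow> real) \<Rightarrow> real" where
  "mb_obj H x =
     (LINT v:{1<..<H}|lborel. q_ERC v * (v * x v - dev x v))
     + (1 / H) * (H * x H - dev x H)"

definition feasible_alloc :: "real \<Rightarrow> (real \<Rightarrow> real) \<Rightarrow> bool" where
  "feasible_alloc H x \<longleftrightarrow> (\<forall>v\<in>{1..H}. 0 \<le> x v \<and> x v \<le> 1)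
     \<and> set_integrable lborel {1<..<H} (\<lambda>v. q_ERC v * (v * x v - dev x v))"

definition MBRev_ERC :: "real \<Rightarrow> real" where
  "MBRev_ERC H = (SUP x\<in>{x. feasible_alloc H x}. mb_obj H x)"

end

theory Submission
  imports Defs
begin

text \<open>Sell with the allocation x(v) = ln v / ln H. A type v that deviates to a lower type w gains
  (v - w) ln w / ln H, and by splitting at w = v / sqrt (ln v) this is at most
  (v ln v - (v/2) ln ln v) / ln H. Hence every type v \<ge> sqrt H pays at least
  v ln (ln H / 2) / (2 ln H), and integrating against the density 1/v^2 over [sqrt H, H]
  yields revenue at least ln (ln H / 2) / 4.\<close>

lemma diff_mult_ln_le:
  fixes v w :: real
  assumes "exp 1 \<le> v" "1 \<le> w" "w < v"
  shows "(v - w) * ln w \<le> v * ln v - v / 2 * ln (ln v)"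
proof -
  have v0: "0 < v" using assms by (smt (verit) exp_gt_zero)
  have lv: "1 \<le> ln v" using assms v0 ln_ge_iff by auto
  define s where "s = 1 / sqrt (ln v)"
  have sq: "1 \<le> sqrt (ln v)" using lv by simp
  have s0: "0 < s" "s \<le> 1" using sq by (auto simp: s_def)
  have ln_s: "ln s = - (ln (ln v) / 2)"
    using lv by (simp add: s_def ln_div ln_sqrt)
  have lw: "0 \<le> ln w" using assms by simp
  show ?thesis
  proof (cases "w \<le> s * v")
    case True
    have "(v - w) * ln w \<le> v * ln w" using lw assms by (intro mult_right_mono) auto
    also have "\<dots> \<le> v * ln (s * v)" using True assms v0 s0 by (intro mult_left_mono) auto
    also have "\<dots> = v * ln v - v / 2 * ln (ln v)"
      using s0 v0 ln_s by (simp add: ln_mult algebra_simps)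
    finally show ?thesis .
  next
    case False
    have "ln (ln v) / 2 \<le> sqrt (ln v)"
      using ln_le_minus_one[of "sqrt (ln v)"] sq lv by (simp add: ln_sqrt)
    moreover have "s * ln v = sqrt (ln v)" using lv by (simp add: s_def field_simps)
    ultimately have "v * (ln (ln v) / 2) \<le> v * (s * ln v)"
      using v0 by simp
    moreover have "(v - w) * ln w \<le> (v - s * v) * ln v"
      using False assms s0 v0 lw by (intro mult_mono) (auto simp: algebra_simps)
    ultimately show ?thesis by (simp add: algebra_simps)
  qed
qed

lemma dev_leI:
  fixes x :: "real \<Rightarrow> real"
  assumes "1 < v" "\<And>w. w \<in> {1..<v} \<Longrightarrow> (v - w) * x w \<le> M"
  shows "dev x v \<le> M"
  unfolding dev_def using assms by (intro cSUP_least) auto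

lemma bdd_above_deviation_gains:
  fixes x :: "real \<Rightarrow> real"
  assumes "\<And>w. w \<in> {1..<v} \<Longrightarrow> 0 \<le> x w \<and> x w \<le> 1"
  shows "bdd_above ((\<lambda>w. (v - w) * x w) ` {1..<v})"
proof (rule bdd_aboveI2)
  fix w assume w: "w \<in> {1..<v}"
  have "(v - w) * x w \<le> v - w" by (rule mult_left_le) (use assms[OF w] w in auto)
  moreover have "1 \<le> w" using w by simp
  ultimately show "(v - w) * x w \<le> v" by linarith
qed

lemma le_dev:
  fixes x :: "real \<Rightarrow> real"
  assumes "\<And>w. w \<in> {1..<v} \<Longrightarrow> 0 \<le> x w \<and> x w \<le> 1" "w \<in> {1..<v}"
  shows "(v - w) * x w \<le> dev x v"
  unfolding dev_def using assms(2) bdd_above_deviation_gains[OF assms(1)] by (rule cSUP_upper)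

lemma dev_nonneg:
  fixes x :: "real \<Rightarrow> real"
  assumes "\<And>w. w \<in> {1..<v} \<Longrightarrow> 0 \<le> x w \<and> x w \<le> 1" "1 < v"
  shows "0 \<le> dev x v"
proof -
  have "(v - 1) * x 1 \<le> dev x v" using assms by (intro le_dev) auto
  moreover have "0 \<le> (v - 1) * x 1" using assms by simp
  ultimately show ?thesis by linarith
qed

lemma dev_mono:
  fixes x :: "real \<Rightarrow> real"
  assumes "\<And>w. w \<in> {1..<b} \<Longrightarrow> 0 \<le> x w \<and> x w \<le> 1" "1 < a" "a \<le> b"
  shows "dev x a \<le> dev x b"
proof (rule dev_leI[OF \<open>1 < a\<close>])
  fix w assume w: "w \<in> {1..<a}"
  have "(a - w) * x w \<le> (b - w) * x w" using assms w by (intro mult_right_mono) auto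
  also have "\<dots> \<le> dev x b" using assms w by (intro le_dev) auto
  finally show "(a - w) * x w \<le> dev x b" .
qed

lemma dev_le_mult_self:
  fixes x :: "real \<Rightarrow> real"
  assumes "mono_on {1..v} x" "\<And>w. w \<in> {1..<v} \<Longrightarrow> 0 \<le> x w" "1 < v"
  shows "dev x v \<le> v * x v"
proof (rule dev_leI[OF \<open>1 < v\<close>])
  fix w assume w: "w \<in> {1..<v}"
  have "(v - w) * x w \<le> v * x w" using assms w by (intro mult_right_mono) auto
  also have "\<dots> \<le> v * x v" using w assms(1,3) by (intro mult_left_mono) (auto simp: mono_on_def)
  finally show "(v - w) * x w \<le> v * x v" .
qed

lemma q_ERC_revenue_le_1:
  fixes x :: "real \<Rightarrow> real"
  assumes "1 < v" "0 \<le> dev x v" "x v \<le> 1"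
  shows "q_ERC v * (v * x v - dev x v) \<le> 1"
proof -
  have "q_ERC v * (v * x v - dev x v) \<le> q_ERC v * (v * x v)"
    using assms by (intro mult_left_mono) (auto simp: q_ERC_def)
  also have "\<dots> = x v / v" using assms by (simp add: q_ERC_def power2_eq_square)
  also have "\<dots> \<le> 1" using assms by (simp add: divide_le_eq)
  finally show ?thesis .
qed

lemma mb_obj_le:
  fixes x :: "real \<Rightarrow> real"
  assumes "feasible_alloc H x" "1 < H"
  shows "mb_obj H x \<le> H"
proof -
  have x01: "\<And>w. w \<in> {1..H} \<Longrightarrow> 0 \<le> x w \<and> x w \<le> 1"
    and int: "set_integrable lborel {1<..<H} (\<lambda>v. q_ERC v * (v * x v - dev x v))"
    using assms(1) unfolding feasible_alloc_def by blast+
  have "(LINT v:{1<..<H}|lborel. q_ERC v * (v * x v - dev x v)) \<le> (LINT v:{1<..<H}|lborel. 1)"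
  proof (rule set_integral_mono[OF int])
    show "set_integrable lborel {1<..<H} (\<lambda>v. 1::real)"
      by (rule set_integrable_subset[OF borel_integrable_atLeastAtMost'[of 1 H]]) auto
    fix v assume "v \<in> {1<..<H}"
    with x01 show "q_ERC v * (v * x v - dev x v) \<le> 1"
      by (intro q_ERC_revenue_le_1 dev_nonneg) auto
  qed
  also have "\<dots> = H - 1" using assms(2) by (simp add: set_integral_const emeasure_lborel_Ioo)
  moreover have "(1 / H) * (H * x H - dev x H) \<le> 1"
  proof -
    have "(1 / H) * (H * x H - dev x H) \<le> (1 / H) * (H * x H)"
      using x01 dev_nonneg[of H x] assms(2) by (intro mult_left_mono) auto
    also have "\<dots> = x H" using assms(2) by simp
    moreover have "x H \<le> 1" using x01[of H] assms(2) by auto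
    ultimately show ?thesis by linarith
  qed
  ultimately show ?thesis unfolding mb_obj_def by linarith
qed

lemma feasible_alloc_mono_on:
  fixes x :: "real \<Rightarrow> real"
  assumes "mono_on {1..H} x" "\<And>v. v \<in> {1..H} \<Longrightarrow> 0 \<le> x v \<and> x v \<le> 1" "1 < H"
  shows "feasible_alloc H x"
  unfolding feasible_alloc_def
proof (intro conjI ballI)
  have dev_bounds: "0 \<le> dev x v" "dev x v \<le> v * x v" if "v \<in> {1<..<H}" for v
  proof -
    have "mono_on {1..v} x" by (rule mono_on_subset[OF assms(1)]) (use that in auto)
    with that assms(2) show "0 \<le> dev x v" "dev x v \<le> v * x v"
      by (auto intro!: dev_nonneg dev_le_mult_self)
  qed
  have [measurable]: "x \<in> borel_measurable (restrict_space borel {1<..<H})"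
    "dev x \<in> borel_measurable (restrict_space borel {1<..<H})"
    "(\<lambda>v. v) \<in> borel_measurable (restrict_space borel {1<..<H})"
  proof -
    show "x \<in> borel_measurable (restrict_space borel {1<..<H})"
      by (intro borel_measurable_mono_on_fnc mono_on_subset[OF assms(1)]) auto
    show "dev x \<in> borel_measurable (restrict_space borel {1<..<H})"
      using assms(2) by (intro borel_measurable_mono_on_fnc mono_onI dev_mono) auto
  qed (rule measurable_restrict_space1, simp)
  have "(\<lambda>v. q_ERC v * (v * x v - dev x v)) \<in> borel_measurable (restrict_space borel {1<..<H})"
    unfolding q_ERC_def by measurable
  then have meas: "set_borel_measurable lborel {1<..<H} (\<lambda>v. q_ERC v * (v * x v - dev x v))"
    unfolding set_borel_measurable_def by (subst (asm) borel_measurable_restrict_space_iff) auto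
  have int1: "set_integrable lborel {1<..<H} (\<lambda>v. 1::real)"
    by (rule set_integrable_subset[OF borel_integrable_atLeastAtMost'[of 1 H]]) auto
  show "set_integrable lborel {1<..<H} (\<lambda>v. q_ERC v * (v * x v - dev x v))"
  proof (rule set_integrable_bound[OF int1 meas])
    show "AE v in lborel. v \<in> {1<..<H} \<longrightarrow>
        norm (q_ERC v * (v * x v - dev x v)) \<le> norm (1::real)"
      using dev_bounds assms(2) q_ERC_revenue_le_1 by (intro AE_I2) (auto simp: q_ERC_def)
  qed
qed (use assms(2) in auto)

lemma set_integral_inverse:
  fixes a b :: real
  assumes "0 < a" "a \<le> b"
  shows "set_integrable lborel {a..<b} (\<lambda>v. 1 / v)"
    and "(LINT v:{a..<b}|lborel. 1 / v) = ln b - ln a"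
proof -
  have cont: "continuous_on {a..b} (\<lambda>v::real. 1 / v)"
    using assms by (intro continuous_intros) auto
  show "set_integrable lborel {a..<b} (\<lambda>v. 1 / v)"
    by (rule set_integrable_subset[OF borel_integrable_atLeastAtMost'[OF cont]]) auto
  have "(LBINT v=a..b. 1 / v) = ln b - ln a"
  proof (rule interval_integral_FTC_finite)
    show "continuous_on {min a b..max a b} (\<lambda>v::real. 1 / v)" using cont assms by simp
    fix v assume "min a b \<le> v" "v \<le> max a b"
    then have "(ln has_real_derivative 1 / v) (at v within {min a b..max a b})"
      using assms by (auto intro!: derivative_eq_intros)
    then show "(ln has_vector_derivative 1 / v) (at v within {min a b..max a b})"
      by (simp add: has_real_derivative_iff_has_vector_derivative)
  qed
  then show "(LINT v:{a..<b}|lborel. 1 / v) = ln b - ln a"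
    using assms by (simp add: interval_integral_Ico)
qed

lemma set_integral_Ioo_split:
  fixes f :: "real \<Rightarrow> real"
  assumes "set_integrable lborel {l<..<u} f" "l < m" "m < u"
  shows "(LINT v:{l<..<u}|lborel. f v) = (LINT v:{l<..<m}|lborel. f v) + (LINT v:{m..<u}|lborel. f v)"
proof -
  have "{l<..<u} = {l<..<m} \<union> {m..<u}" using assms by auto
  then show ?thesis
    by (simp only:)
       (rule set_integral_Un; use assms in \<open>auto intro: set_integrable_subset[OF assms(1)]\<close>)
qed

definition log_alloc :: "real \<Rightarrow> real \<Rightarrow> real" where
  "log_alloc H v = ln v / ln H"

lemma mono_on_log_alloc:
  assumes "1 < H"
  shows "mono_on {1..} (log_alloc H)"
  using assms by (auto simp: log_alloc_def mono_on_def intro: divide_right_mono)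

lemma feasible_log_alloc:
  assumes "1 < H"
  shows "feasible_alloc H (log_alloc H)"
  using assms mono_on_subset[OF mono_on_log_alloc[OF assms]]
  by (intro feasible_alloc_mono_on) (auto simp: log_alloc_def divide_le_eq)

lemma dev_log_alloc_le:
  assumes "1 < H" "exp 1 \<le> v"
  shows "dev (log_alloc H) v \<le> (v * ln v - v / 2 * ln (ln v)) / ln H"
proof (rule dev_leI)
  show "1 < v" using assms(2) by (smt (verit) one_less_exp_iff)
  fix w assume "w \<in> {1..<v}"
  with assms show "(v - w) * log_alloc H w \<le> (v * ln v - v / 2 * ln (ln v)) / ln H"
    using diff_mult_ln_le[of v w] by (simp add: log_alloc_def divide_right_mono)
qed

lemma log_alloc_revenue_ge:
  assumes "1 < H" "exp 1 \<le> v" "ln H / 2 \<le> ln v"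
  shows "ln (ln H / 2) / (2 * ln H) * (1 / v)
           \<le> q_ERC v * (v * log_alloc H v - dev (log_alloc H) v)"
proof -
  have v0: "0 < v" using assms(2) by (smt (verit) exp_gt_zero)
  have L0: "0 < ln H" using assms(1) by simp
  have "1 \<le> ln v" using assms(2) v0 ln_ge_iff by auto
  then have "ln (ln H / 2) \<le> ln (ln v)" using assms L0 by (subst ln_le_cancel_iff) auto
  then have "v / 2 * ln (ln H / 2) / ln H \<le> v / 2 * ln (ln v) / ln H"
    using L0 v0 by (intro divide_right_mono mult_left_mono) auto
  also have "\<dots> \<le> v * log_alloc H v - dev (log_alloc H) v"
    using dev_log_alloc_le[OF assms(1,2)] L0 by (simp add: log_alloc_def diff_divide_distrib)
  finally have "q_ERC v * (v / 2 * ln (ln H / 2) / ln H)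
      \<le> q_ERC v * (v * log_alloc H v - dev (log_alloc H) v)"
    by (intro mult_left_mono) (auto simp: q_ERC_def)
  moreover have "q_ERC v * (v / 2 * ln (ln H / 2) / ln H) = ln (ln H / 2) / (2 * ln H) * (1 / v)"
    using v0 by (simp add: q_ERC_def power2_eq_square field_simps)
  ultimately show ?thesis by simp
qed

lemma mb_obj_log_alloc_ge:
  assumes "exp 4 \<le> H"
  shows "ln (ln H / 2) / 4 \<le> mb_obj H (log_alloc H)"
proof -
  define L where "L = ln H"
  define a where "a = exp (L / 2)"
  define c where "c = ln (L / 2) / (2 * L)"
  define g where "g = (\<lambda>v. q_ERC v * (v * log_alloc H v - dev (log_alloc H) v))"
  have H1: "1 < H" using assms by (smt (verit) one_less_exp_iff)
  have L4: "4 \<le> L" using assms H1 ln_ge_iff by (simp add: L_def)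
  have a1: "1 < a" and a_e: "exp 1 \<le> a" and ln_a: "ln a = L / 2" using L4 by (simp_all add: a_def)
  have "a < exp L" using L4 by (simp add: a_def)
  then have aH: "a < H" using H1 by (simp add: L_def)
  have dev_le: "dev (log_alloc H) v \<le> v * log_alloc H v" if "1 < v" for v
    using that H1 mono_on_subset[OF mono_on_log_alloc[OF H1]]
    by (intro dev_le_mult_self) (auto simp: log_alloc_def)
  have g_int: "set_integrable lborel {1<..<H} g"
    using feasible_log_alloc[OF H1] unfolding feasible_alloc_def g_def by blast
  have "0 \<le> (LINT v:{1<..<a}|lborel. g v)"
    unfolding set_lebesgue_integral_def using dev_le
    by (intro Bochner_Integration.integral_nonneg) (auto simp: g_def q_ERC_def indicator_def)
  moreover have "c * (L / 2) \<le> (LINT v:{a..<H}|lborel. g v)"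
  proof -
    have "(LINT v:{a..<H}|lborel. c * (1 / v)) \<le> (LINT v:{a..<H}|lborel. g v)"
    proof (rule set_integral_mono)
      show "set_integrable lborel {a..<H} (\<lambda>v. c * (1 / v))"
        using set_integral_inverse(1)[of a H] a1 aH by (intro set_integrable_mult_right) auto
      show "set_integrable lborel {a..<H} g"
        by (rule set_integrable_subset[OF g_int]) (use a1 in auto)
      fix v assume v: "v \<in> {a..<H}"
      then have "ln a \<le> ln v" using a1 by simp
      with v a_e ln_a show "c * (1 / v) \<le> g v"
        unfolding c_def g_def L_def by (intro log_alloc_revenue_ge[OF H1]) auto
    qed
    moreover have "(LINT v:{a..<H}|lborel. c * (1 / v)) = c * (LINT v:{a..<H}|lborel. 1 / v)"
      by (rule set_integral_mult_right)
    moreover have "(LINT v:{a..<H}|lborel. 1 / v) = L / 2"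
      using set_integral_inverse(2)[of a H] a1 aH ln_a by (simp add: L_def)
    ultimately show ?thesis by simp
  qed
  moreover have "(LINT v:{1<..<H}|lborel. g v)
      = (LINT v:{1<..<a}|lborel. g v) + (LINT v:{a..<H}|lborel. g v)"
    using set_integral_Ioo_split[OF g_int a1 aH] .
  moreover have "0 \<le> (1 / H) * (H * log_alloc H H - dev (log_alloc H) H)"
    using dev_le[OF H1] H1 by simp
  moreover have "c * (L / 2) = ln (L / 2) / 4" using L4 by (simp add: c_def)
  ultimately show ?thesis unfolding mb_obj_def g_def L_def by linarith
qed

lemma MBRev_ERC_ge_ln_ln:
  assumes "exp 4 \<le> H"
  shows "ln (ln H) / 8 \<le> MBRev_ERC H"
proof -
  have H1: "1 < H" using assms by (smt (verit) one_less_exp_iff)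
  have L4: "4 \<le> ln H" using assms H1 ln_ge_iff by simp
  have "ln 4 \<le> ln (ln H)" using L4 by simp
  moreover have "ln (4::real) = 2 * ln 2" using ln_realpow[of 2 2] by simp
  ultimately have "ln (ln H) / 8 \<le> ln (ln H / 2) / 4" using L4 by (simp add: ln_div)
  also have "\<dots> \<le> mb_obj H (log_alloc H)" by (rule mb_obj_log_alloc_ge[OF assms])
  also have "\<dots> \<le> MBRev_ERC H"
    unfolding MBRev_ERC_def using feasible_log_alloc[OF H1] mb_obj_le[OF _ H1]
    by (intro cSUP_upper bdd_aboveI2) auto
  finally show ?thesis .
qed

theorem theoremC6:
  shows "MBRev_ERC \<in> \<Omega>[at_top](\<lambda>H. ln (ln H))"
proof (rule landau_omega.bigI[of "1/8"])
  have "\<forall>\<^sub>F H in at_top. exp 4 \<le> H \<and> exp 1 \<le> (H::real)"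
    by (intro eventually_conj eventually_ge_at_top)
  then show "\<forall>\<^sub>F H in at_top. norm (MBRev_ERC H) \<ge> 1/8 * norm (ln (ln H))"
  proof eventually_elim
    case (elim H)
    then have "0 < H" by (smt (verit) exp_gt_zero)
    with elim have "1 \<le> ln H" using ln_ge_iff by blast
    then have "0 \<le> ln (ln H)" by simp
    with MBRev_ERC_ge_ln_ln[of H] elim show ?case by simp
  qed
qed simp

end
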